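(* (Provably in $\mathsf{Z}^-_{\mathrm{FTM}\omega}$.) Let $U,V$ be any sets. Then $U\times V$ is a set, and the collection $\mathcal P_{\mathrm{fin}}(U)$ of all finite subsets of $U$ and the collection $U^{<\omega}$ of all finite sequences of elements of $U$ are sets as well.
   Context: $\mathsf{Z}^-_{\mathrm{FTM}\omega}$ is Zermelo set theory without Power Set and Choice (Extensionality, Pairing, Union, Infinity, Regularity, Separation) plus: (FC) every set $X$ has a superset $Y$ such that every finite $x\subseteq Y$ belongs to $Y$; (TS) every set has a transitive superset; (MC) every set binary relation $A$ that is well-founded and extensional admits a transitive set $X$ and a bijection $\eta$ from its field onto $X$ with $jAk\iff\eta(j)\in\eta(k)$; (Count) every set admits an injection into $\omega$. *)

theory Defs
  imports Main
begin

text \<open>A model of set theory is a type 'a with a binary membership relation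
  e :: 'a => 'a => bool (e x y means "x is an element of y").
  Provability in a first-order theory is rendered as truth in every model
  (Goedel completeness).\<close>

section \<open>First-order formulas of the language {member} (for the Separation schema)\<close>

datatype fm =
    FMem nat nat
  | FEq nat nat
  | FNeg fm
  | FAnd fm fm
  | FEx nat fm

fun sat :: "('a \<Rightarrow> 'a \<Rightarrow> bool) \<Rightarrow> (nat \<Rightarrow> 'a) \<Rightarrow> fm \<Rightarrow> bool" where
  "sat e env (FMem i j) = e (env i) (env j)"
| "sat e env (FEq i j) = (env i = env j)"
| "sat e env (FNeg p) = (\<not> sat e env p)"
| "sat e env (FAnd p q) = (sat e env p \<and> sat e env q)"
| "sat e env (FEx i p) = (\<exists>a. sat e (env(i := a)) p)"

definition subset_m :: "('a \<Rightarrow> 'a \<Rightarrow> bool) \<Rightarrow> 'a \<Rightarrow> 'a \<Rightarrow> bool" where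
  "subset_m e x y \<longleftrightarrow> (\<forall>z. e z x \<longrightarrow> e z y)"

definition empty_m :: "('a \<Rightarrow> 'a \<Rightarrow> bool) \<Rightarrow> 'a \<Rightarrow> bool" where
  "empty_m e x \<longleftrightarrow> (\<forall>z. \<not> e z x)"

definition transitive_m :: "('a \<Rightarrow> 'a \<Rightarrow> bool) \<Rightarrow> 'a \<Rightarrow> bool" where
  "transitive_m e x \<longleftrightarrow> (\<forall>y z. e y x \<and> e z y \<longrightarrow> e z x)"

definition upair_m :: "('a \<Rightarrow> 'a \<Rightarrow> bool) \<Rightarrow> 'a \<Rightarrow> 'a \<Rightarrow> 'a \<Rightarrow> bool" where
  "upair_m e a b p \<longleftrightarrow> (\<forall>z. e z p \<longleftrightarrow> z = a \<or> z = b)"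

definition pair_m :: "('a \<Rightarrow> 'a \<Rightarrow> bool) \<Rightarrow> 'a \<Rightarrow> 'a \<Rightarrow> 'a \<Rightarrow> bool" where
  "pair_m e a b p \<longleftrightarrow> (\<exists>s t. upair_m e a a s \<and> upair_m e a b t \<and> upair_m e s t p)"

definition succ_m :: "('a \<Rightarrow> 'a \<Rightarrow> bool) \<Rightarrow> 'a \<Rightarrow> 'a \<Rightarrow> bool" where
  "succ_m e x y \<longleftrightarrow> (\<forall>z. e z y \<longleftrightarrow> e z x \<or> z = x)"

definition inductive_m :: "('a \<Rightarrow> 'a \<Rightarrow> bool) \<Rightarrow> 'a \<Rightarrow> bool" where
  "inductive_m e x \<longleftrightarrow> (\<exists>z0. empty_m e z0 \<and> e z0 x) \<and> (\<forall>y. e y x \<longrightarrow> (\<exists>s. succ_m e y s \<and> e s x))"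

definition omega_m :: "('a \<Rightarrow> 'a \<Rightarrow> bool) \<Rightarrow> 'a \<Rightarrow> bool" where
  "omega_m e w \<longleftrightarrow> inductive_m e w \<and> (\<forall>x. inductive_m e x \<longrightarrow> subset_m e w x)"

definition in_omega_m :: "('a \<Rightarrow> 'a \<Rightarrow> bool) \<Rightarrow> 'a \<Rightarrow> bool" where
  "in_omega_m e n \<longleftrightarrow> (\<exists>w. omega_m e w \<and> e n w)"

definition rel_m :: "('a \<Rightarrow> 'a \<Rightarrow> bool) \<Rightarrow> 'a \<Rightarrow> 'a \<Rightarrow> 'a \<Rightarrow> bool" where
  "rel_m e r a b \<longleftrightarrow> (\<exists>p. e p r \<and> pair_m e a b p)"

definition relation_m :: "('a \<Rightarrow> 'a \<Rightarrow> bool) \<Rightarrow> 'a \<Rightarrow> bool" where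
  "relation_m e r \<longleftrightarrow> (\<forall>p. e p r \<longrightarrow> (\<exists>a b. pair_m e a b p))"

definition function_m :: "('a \<Rightarrow> 'a \<Rightarrow> bool) \<Rightarrow> 'a \<Rightarrow> bool" where
  "function_m e f \<longleftrightarrow> relation_m e f \<and>
     (\<forall>a b b'. rel_m e f a b \<and> rel_m e f a b' \<longrightarrow> b = b')"

definition dom_is_m :: "('a \<Rightarrow> 'a \<Rightarrow> bool) \<Rightarrow> 'a \<Rightarrow> 'a \<Rightarrow> bool" where
  "dom_is_m e f A \<longleftrightarrow> (\<forall>a. e a A \<longleftrightarrow> (\<exists>b. rel_m e f a b))"

definition ran_is_m :: "('a \<Rightarrow> 'a \<Rightarrow> bool) \<Rightarrow> 'a \<Rightarrow> 'a \<Rightarrow> bool" where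
  "ran_is_m e f B \<longleftrightarrow> (\<forall>b. e b B \<longleftrightarrow> (\<exists>a. rel_m e f a b))"

definition injective_m :: "('a \<Rightarrow> 'a \<Rightarrow> bool) \<Rightarrow> 'a \<Rightarrow> bool" where
  "injective_m e f \<longleftrightarrow> (\<forall>a a' b. rel_m e f a b \<and> rel_m e f a' b \<longrightarrow> a = a')"

definition bij_m :: "('a \<Rightarrow> 'a \<Rightarrow> bool) \<Rightarrow> 'a \<Rightarrow> 'a \<Rightarrow> 'a \<Rightarrow> bool" where
  "bij_m e f A B \<longleftrightarrow> function_m e f \<and> dom_is_m e f A \<and> ran_is_m e f B \<and> injective_m e f"

definition finite_m :: "('a \<Rightarrow> 'a \<Rightarrow> bool) \<Rightarrow> 'a \<Rightarrow> bool" where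
  "finite_m e x \<longleftrightarrow> (\<exists>n f. in_omega_m e n \<and> bij_m e f n x)"

definition finseq_m :: "('a \<Rightarrow> 'a \<Rightarrow> bool) \<Rightarrow> 'a \<Rightarrow> 'a \<Rightarrow> bool" where
  "finseq_m e U s \<longleftrightarrow> (\<exists>n. in_omega_m e n \<and> function_m e s \<and> dom_is_m e s n \<and>
      (\<forall>a b. rel_m e s a b \<longrightarrow> e b U))"

definition in_field_m :: "('a \<Rightarrow> 'a \<Rightarrow> bool) \<Rightarrow> 'a \<Rightarrow> 'a \<Rightarrow> bool" where
  "in_field_m e r x \<longleftrightarrow> (\<exists>y. rel_m e r x y \<or> rel_m e r y x)"

definition wf_m :: "('a \<Rightarrow> 'a \<Rightarrow> bool) \<Rightarrow> 'a \<Rightarrow> bool" where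
  "wf_m e r \<longleftrightarrow> (\<forall>s. (\<exists>y. e y s) \<and> (\<forall>y. e y s \<longrightarrow> in_field_m e r y) \<longrightarrow>
      (\<exists>m. e m s \<and> (\<forall>y. e y s \<longrightarrow> \<not> rel_m e r y m)))"

definition extensional_m :: "('a \<Rightarrow> 'a \<Rightarrow> bool) \<Rightarrow> 'a \<Rightarrow> bool" where
  "extensional_m e r \<longleftrightarrow> (\<forall>j k. in_field_m e r j \<and> in_field_m e r k \<and>
      (\<forall>i. rel_m e r i j \<longleftrightarrow> rel_m e r i k) \<longrightarrow> j = k)"

definition ax_ext :: "('a \<Rightarrow> 'a \<Rightarrow> bool) \<Rightarrow> bool" where
  "ax_ext e \<longleftrightarrow> (\<forall>x y. (\<forall>z. e z x \<longleftrightarrow> e z y) \<longrightarrow> x = y)"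

definition ax_pairing :: "('a \<Rightarrow> 'a \<Rightarrow> bool) \<Rightarrow> bool" where
  "ax_pairing e \<longleftrightarrow> (\<forall>a b. \<exists>p. upair_m e a b p)"

definition ax_union :: "('a \<Rightarrow> 'a \<Rightarrow> bool) \<Rightarrow> bool" where
  "ax_union e \<longleftrightarrow> (\<forall>x. \<exists>u. \<forall>z. e z u \<longleftrightarrow> (\<exists>y. e y x \<and> e z y))"

definition ax_infinity :: "('a \<Rightarrow> 'a \<Rightarrow> bool) \<Rightarrow> bool" where
  "ax_infinity e \<longleftrightarrow> (\<exists>x. inductive_m e x)"

definition ax_regularity :: "('a \<Rightarrow> 'a \<Rightarrow> bool) \<Rightarrow> bool" where
  "ax_regularity e \<longleftrightarrow> (\<forall>x. (\<exists>y. e y x) \<longrightarrow> (\<exists>y. e y x \<and> \<not> (\<exists>z. e z y \<and> e z x)))"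

text \<open>Separation schema: for every first-order formula phi (with parameters given by env,
  separated variable i): for every x there is y = {z \<in> x. phi(z)}.\<close>
definition ax_separation :: "('a \<Rightarrow> 'a \<Rightarrow> bool) \<Rightarrow> bool" where
  "ax_separation e \<longleftrightarrow> (\<forall>phi env i x. \<exists>y. \<forall>z. e z y \<longleftrightarrow> e z x \<and> sat e (env(i := z)) phi)"

definition ax_FC :: "('a \<Rightarrow> 'a \<Rightarrow> bool) \<Rightarrow> bool" where
  "ax_FC e \<longleftrightarrow> (\<forall>X. \<exists>Y. subset_m e X Y \<and>
      (\<forall>x. finite_m e x \<and> subset_m e x Y \<longrightarrow> e x Y))"

definition ax_TS :: "('a \<Rightarrow> 'a \<Rightarrow> bool) \<Rightarrow> bool" where
  "ax_TS e \<longleftrightarrow> (\<forall>X. \<exists>Y. subset_m e X Y \<and> transitive_m e Y)"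

definition ax_MC :: "('a \<Rightarrow> 'a \<Rightarrow> bool) \<Rightarrow> bool" where
  "ax_MC e \<longleftrightarrow> (\<forall>A. relation_m e A \<and> wf_m e A \<and> extensional_m e A \<longrightarrow>
      (\<exists>X \<eta>. transitive_m e X \<and> function_m e \<eta> \<and>
         (\<forall>j. (\<exists>b. rel_m e \<eta> j b) \<longleftrightarrow> in_field_m e A j) \<and>
         ran_is_m e \<eta> X \<and> injective_m e \<eta> \<and>
         (\<forall>j k b c. rel_m e \<eta> j b \<and> rel_m e \<eta> k c \<longrightarrow> (rel_m e A j k \<longleftrightarrow> e b c))))"

definition ax_count :: "('a \<Rightarrow> 'a \<Rightarrow> bool) \<Rightarrow> bool" where
  "ax_count e \<longleftrightarrow> (\<forall>X. \<exists>f. function_m e f \<and> dom_is_m e f X \<and> injective_m e f \<and>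
      (\<forall>a b. rel_m e f a b \<longrightarrow> in_omega_m e b))"

definition Z_FTM_omega :: "('a \<Rightarrow> 'a \<Rightarrow> bool) \<Rightarrow> bool" where
  "Z_FTM_omega e \<longleftrightarrow> ax_ext e \<and> ax_pairing e \<and> ax_union e \<and> ax_infinity e \<and>
     ax_regularity e \<and> ax_separation e \<and> ax_FC e \<and> ax_TS e \<and> ax_MC e \<and> ax_count e"

end

theory Submission
  imports Defs
begin

text \<open>By FC every set X lies inside a set Y that contains all its finite subsets. Unordered pairs
  are finite, so such a Y is closed under Kuratowski pairing, and for Y containing
  U \<union> V the product U \<times> V is a subset of Y, which Separation carves out. The finite subsets of
  U lie in such a Y for X = U. A finite sequence s of elements of U with domain n \<in> \<omega> is
  finite, being in bijection with n via a \<mapsto> (a, s(a)), and it consists of pairs of elements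
  of \<Union>\<omega> \<union> U; so all of them lie in such a Y for X = \<Union>\<omega> \<union> U.\<close>

definition FOr :: "fm \<Rightarrow> fm \<Rightarrow> fm" where "FOr p q = FNeg (FAnd (FNeg p) (FNeg q))"
definition FImp :: "fm \<Rightarrow> fm \<Rightarrow> fm" where "FImp p q = FNeg (FAnd p (FNeg q))"
definition FIff :: "fm \<Rightarrow> fm \<Rightarrow> fm" where "FIff p q = FAnd (FImp p q) (FImp q p)"
definition FAll :: "nat \<Rightarrow> fm \<Rightarrow> fm" where "FAll i p = FNeg (FEx i (FNeg p))"

lemma sat_connectives [simp]:
  "sat e env (FOr p q) = (sat e env p \<or> sat e env q)"
  "sat e env (FImp p q) = (sat e env p \<longrightarrow> sat e env q)"
  "sat e env (FIff p q) = (sat e env p \<longleftrightarrow> sat e env q)"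
  "sat e env (FAll i p) = (\<forall>a. sat e (env(i := a)) p)"
  by (auto simp: FOr_def FImp_def FIff_def FAll_def)

text \<open>The last argument k of each formula builder below is the first
  variable index reserved for its bound variables, so the free indices must lie below k.\<close>

definition "Fsubset x y k = FAll k (FImp (FMem k x) (FMem k y))"
definition "Fempty x k = FAll k (FNeg (FMem k x))"
definition "Fupair a b p k = FAll k (FIff (FMem k p) (FOr (FEq k a) (FEq k b)))"
definition "Fpair a b p k = FEx k (FEx (k+1) (FAnd (Fupair a a k (k+2))
  (FAnd (Fupair a b (k+1) (k+2)) (Fupair k (k+1) p (k+2)))))"
definition "Fsucc x y k = FAll k (FIff (FMem k y) (FOr (FMem k x) (FEq k x)))"
definition "Finductive x k = FAnd (FEx k (FAnd (Fempty k (k+1)) (FMem k x)))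
  (FAll k (FImp (FMem k x) (FEx (k+1) (FAnd (Fsucc k (k+1) (k+2)) (FMem (k+1) x)))))"
definition "Fomega w k = FAnd (Finductive w k) (FAll k (FImp (Finductive k (k+1)) (Fsubset w k (k+1))))"
definition "Fin_omega n k = FEx k (FAnd (Fomega k (k+1)) (FMem n k))"
definition "Frel r a b k = FEx k (FAnd (FMem k r) (Fpair a b k (k+1)))"
definition "Frelation r k = FAll k (FImp (FMem k r) (FEx (k+1) (FEx (k+2) (Fpair (k+1) (k+2) k (k+3)))))"
definition "Ffunction f k = FAnd (Frelation f k) (FAll k (FAll (k+1) (FAll (k+2)
  (FImp (FAnd (Frel f k (k+1) (k+3)) (Frel f k (k+2) (k+3))) (FEq (k+1) (k+2))))))"
definition "Fdom f A k = FAll k (FIff (FMem k A) (FEx (k+1) (Frel f k (k+1) (k+2))))"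
definition "Fran f B k = FAll k (FIff (FMem k B) (FEx (k+1) (Frel f (k+1) k (k+2))))"
definition "Finj f k = FAll k (FAll (k+1) (FAll (k+2)
  (FImp (FAnd (Frel f k (k+2) (k+3)) (Frel f (k+1) (k+2) (k+3))) (FEq k (k+1)))))"
definition "Fbij f A B k = FAnd (Ffunction f k) (FAnd (Fdom f A k) (FAnd (Fran f B k) (Finj f k)))"
definition "Ffinite x k = FEx k (FEx (k+1) (FAnd (Fin_omega k (k+2)) (Fbij (k+1) k x (k+2))))"
definition "Ffinseq U s k = FEx k (FAnd (Fin_omega k (k+1)) (FAnd (Ffunction s (k+1))
  (FAnd (Fdom s k (k+1)) (FAll (k+1) (FAll (k+2) (FImp (Frel s (k+1) (k+2) (k+3)) (FMem (k+2) U)))))))"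

lemma sat_Fsubset [simp]: "x < k \<Longrightarrow> y < k \<Longrightarrow> sat e env (Fsubset x y k) = subset_m e (env x) (env y)"
  by (simp add: Fsubset_def subset_m_def)
lemma sat_Fempty [simp]: "x < k \<Longrightarrow> sat e env (Fempty x k) = empty_m e (env x)"
  by (simp add: Fempty_def empty_m_def)
lemma sat_Fupair [simp]:
  "a < k \<Longrightarrow> b < k \<Longrightarrow> p < k \<Longrightarrow> sat e env (Fupair a b p k) = upair_m e (env a) (env b) (env p)"
  by (simp add: Fupair_def upair_m_def)
lemma sat_Fpair [simp]:
  "a < k \<Longrightarrow> b < k \<Longrightarrow> p < k \<Longrightarrow> sat e env (Fpair a b p k) = pair_m e (env a) (env b) (env p)"
  by (simp add: Fpair_def pair_m_def)
lemma sat_Fsucc [simp]: "x < k \<Longrightarrow> y < k \<Longrightarrow> sat e env (Fsucc x y k) = succ_m e (env x) (env y)"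
  by (simp add: Fsucc_def succ_m_def)
lemma sat_Finductive [simp]: "x < k \<Longrightarrow> sat e env (Finductive x k) = inductive_m e (env x)"
  by (simp add: Finductive_def inductive_m_def)
lemma sat_Fomega [simp]: "x < k \<Longrightarrow> sat e env (Fomega x k) = omega_m e (env x)"
  by (simp add: Fomega_def omega_m_def)
lemma sat_Fin_omega [simp]: "x < k \<Longrightarrow> sat e env (Fin_omega x k) = in_omega_m e (env x)"
  by (simp add: Fin_omega_def in_omega_m_def)
lemma sat_Frel [simp]:
  "r < k \<Longrightarrow> a < k \<Longrightarrow> b < k \<Longrightarrow> sat e env (Frel r a b k) = rel_m e (env r) (env a) (env b)"
  by (simp add: Frel_def rel_m_def)
lemma sat_Frelation [simp]: "r < k \<Longrightarrow> sat e env (Frelation r k) = relation_m e (env r)"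
  by (simp add: Frelation_def relation_m_def)
lemma sat_Ffunction [simp]: "r < k \<Longrightarrow> sat e env (Ffunction r k) = function_m e (env r)"
  by (simp add: Ffunction_def function_m_def)
lemma sat_Fdom [simp]: "r < k \<Longrightarrow> a < k \<Longrightarrow> sat e env (Fdom r a k) = dom_is_m e (env r) (env a)"
  by (simp add: Fdom_def dom_is_m_def)
lemma sat_Fran [simp]: "r < k \<Longrightarrow> a < k \<Longrightarrow> sat e env (Fran r a k) = ran_is_m e (env r) (env a)"
  by (simp add: Fran_def ran_is_m_def)
lemma sat_Finj [simp]: "r < k \<Longrightarrow> sat e env (Finj r k) = injective_m e (env r)"
  by (simp add: Finj_def injective_m_def)
lemma sat_Fbij [simp]:
  "r < k \<Longrightarrow> a < k \<Longrightarrow> b < k \<Longrightarrow> sat e env (Fbij r a b k) = bij_m e (env r) (env a) (env b)"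
  by (simp add: Fbij_def bij_m_def)
lemma sat_Ffinite [simp]: "x < k \<Longrightarrow> sat e env (Ffinite x k) = finite_m e (env x)"
  by (simp add: Ffinite_def finite_m_def)
lemma sat_Ffinseq [simp]: "u < k \<Longrightarrow> s < k \<Longrightarrow> sat e env (Ffinseq u s k) = finseq_m e (env u) (env s)"
  by (simp add: Ffinseq_def finseq_m_def)

locale Z_FTM_omega_model =
  fixes e :: "'a \<Rightarrow> 'a \<Rightarrow> bool"
  assumes model: "Z_FTM_omega e"
begin

definition elts :: "'a \<Rightarrow> 'a set" where
  "elts x = {z. e z x}"

lemma elts_inject: "elts x = elts y \<Longrightarrow> x = y"
  using model unfolding Z_FTM_omega_def ax_ext_def elts_def by blast

lemma upair_m_iff_elts: "upair_m e a b p \<longleftrightarrow> elts p = {a, b}"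
  unfolding upair_m_def elts_def by auto

lemma empty_m_iff_elts: "empty_m e x \<longleftrightarrow> elts x = {}"
  unfolding empty_m_def elts_def by auto

lemma succ_m_iff_elts: "succ_m e x y \<longleftrightarrow> elts y = insert x (elts x)"
  unfolding succ_m_def elts_def by auto

lemma subset_m_iff_elts: "subset_m e x y \<longleftrightarrow> elts x \<subseteq> elts y"
  unfolding subset_m_def elts_def by auto

lemma upair_exists: "\<exists>p. upair_m e a b p"
  using model unfolding Z_FTM_omega_def ax_pairing_def by blast

lemma upair_unique: "upair_m e a b p \<Longrightarrow> upair_m e a b p' \<Longrightarrow> p = p'"
  by (simp add: upair_m_iff_elts elts_inject)

lemma pair_exists: "\<exists>p. pair_m e a b p"
  unfolding pair_m_def using upair_exists by blast

lemma pair_unique: "pair_m e a b p \<Longrightarrow> pair_m e a b p' \<Longrightarrow> p = p'"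
  unfolding pair_m_def by (metis upair_unique)

lemma elts_image_pair_m: "pair_m e a b p \<Longrightarrow> elts ` elts p = {{a}, {a, b}}"
  unfolding pair_m_def upair_m_iff_elts by auto

lemma pair_inject: "pair_m e a b p \<Longrightarrow> pair_m e a' b' p \<Longrightarrow> a = a' \<and> b = b'"
  by (drule elts_image_pair_m)+ (auto simp: doubleton_eq_iff)

lemma union_exists: "\<exists>u. elts u = \<Union> (elts ` elts x)"
proof -
  obtain u where "\<forall>z. e z u \<longleftrightarrow> (\<exists>y. e y x \<and> e z y)"
    using model unfolding Z_FTM_omega_def ax_union_def by blast
  then have "elts u = \<Union> (elts ` elts x)" unfolding elts_def by auto
  then show ?thesis ..
qed

lemma binary_union_exists: "\<exists>u. elts u = elts A \<union> elts B"
proof -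
  obtain p where p: "elts p = {A, B}" using upair_exists upair_m_iff_elts by blast
  obtain u where "elts u = \<Union> (elts ` elts p)" using union_exists by blast
  with p show ?thesis by auto
qed

lemma separation: "\<exists>y. elts y = {z \<in> elts x. sat e (env(i := z)) phi}"
proof -
  obtain y where "\<forall>z. e z y \<longleftrightarrow> e z x \<and> sat e (env(i := z)) phi"
    using model unfolding Z_FTM_omega_def ax_separation_def by blast
  then have "elts y = {z \<in> elts x. sat e (env(i := z)) phi}" unfolding elts_def by auto
  then show ?thesis ..
qed

lemma definable_subset_exists:
  assumes "{z. P z} \<subseteq> elts Y" and "\<And>z. P z \<longleftrightarrow> sat e (env(i := z)) phi"
  shows "\<exists>y. \<forall>z. e z y \<longleftrightarrow> P z"
proof -
  obtain y where "elts y = {z \<in> elts Y. sat e (env(i := z)) phi}" using separation by blast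
  then have "elts y = {z. P z}" using assms by auto
  then show ?thesis unfolding elts_def by auto
qed

lemma inductive_m_contains_empty: "inductive_m e a \<Longrightarrow> empty_m e z \<Longrightarrow> e z a"
  unfolding inductive_m_def empty_m_iff_elts by (metis elts_inject)

lemma inductive_m_contains_succ: "inductive_m e a \<Longrightarrow> e y a \<Longrightarrow> succ_m e y s \<Longrightarrow> e s a"
  unfolding inductive_m_def succ_m_iff_elts by (metis elts_inject)

lemma omega_exists: "\<exists>w. omega_m e w"
proof -
  obtain x where x: "inductive_m e x"
    using model unfolding Z_FTM_omega_def ax_infinity_def by blast
  define P where "P z \<longleftrightarrow> e z x \<and> (\<forall>a. inductive_m e a \<longrightarrow> e z a)" for z
  have "\<exists>w. \<forall>z. e z w \<longleftrightarrow> P z"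
    by (rule definable_subset_exists[where Y = x and env = "\<lambda>_. x" and i = 0
          and phi = "FAnd (FMem 0 1) (FAll 1 (FImp (Finductive 1 2) (FMem 0 1)))"])
      (auto simp: P_def elts_def)
  then obtain w where w: "\<And>z. e z w \<longleftrightarrow> P z" by blast
  have "inductive_m e w"
  proof -
    obtain z0 where "empty_m e z0" "e z0 x" using x unfolding inductive_m_def by blast
    then have "e z0 w" unfolding w P_def by (blast intro: inductive_m_contains_empty)
    moreover have "\<exists>s. succ_m e y s \<and> e s w" if "e y w" for y
    proof -
      obtain s where "succ_m e y s" "e s x" using x \<open>e y w\<close> unfolding inductive_m_def w P_def by blast
      with \<open>e y w\<close> show ?thesis unfolding w P_def by (blast intro: inductive_m_contains_succ)
    qed
    ultimately show ?thesis unfolding inductive_m_def using \<open>empty_m e z0\<close> by blast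
  qed
  moreover have "\<forall>a. inductive_m e a \<longrightarrow> subset_m e w a"
    unfolding subset_m_def w P_def by blast
  ultimately show ?thesis unfolding omega_m_def by blast
qed

lemma omega_unique: "omega_m e w \<Longrightarrow> omega_m e w' \<Longrightarrow> w = w'"
  unfolding omega_m_def subset_m_iff_elts by (blast intro: elts_inject)

lemma numerals_in_omega:
  "\<exists>w z0 z1 z2. omega_m e w \<and> e z0 w \<and> e z1 w \<and> e z2 w \<and>
     elts z0 = {} \<and> elts z1 = {z0} \<and> elts z2 = {z0, z1}"
proof -
  obtain w where w: "omega_m e w" using omega_exists by blast
  then have "inductive_m e w" unfolding omega_m_def by blast
  then obtain z0 z1 z2 where "empty_m e z0" "succ_m e z0 z1" "succ_m e z1 z2" "e z0 w" "e z1 w" "e z2 w"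
    unfolding inductive_m_def by metis
  moreover from this have "elts z0 = {}" "elts z1 = {z0}" "elts z2 = {z0, z1}"
    unfolding empty_m_iff_elts succ_m_iff_elts by auto
  ultimately show ?thesis using w by blast
qed

lemma bij_mI:
  assumes "relation_m e f"
    and "\<And>c d. rel_m e f c d \<Longrightarrow> e c A \<and> e d B"
    and "\<And>c. e c A \<Longrightarrow> \<exists>!d. rel_m e f c d"
    and "\<And>d. e d B \<Longrightarrow> \<exists>!c. rel_m e f c d"
  shows "bij_m e f A B"
  unfolding bij_m_def function_m_def dom_is_m_def ran_is_m_def injective_m_def
  using assms by metis

lemma rel_m_of_two_pairs:
  assumes f: "elts f = {q0, q1}" and q: "pair_m e c0 d0 q0" "pair_m e c1 d1 q1"
  shows "relation_m e f" and "rel_m e f c d \<longleftrightarrow> (c = c0 \<and> d = d0) \<or> (c = c1 \<and> d = d1)"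
proof -
  have members: "e p f \<longleftrightarrow> p = q0 \<or> p = q1" for p using f unfolding elts_def by auto
  show "relation_m e f" unfolding relation_m_def members using q by blast
  show "rel_m e f c d \<longleftrightarrow> (c = c0 \<and> d = d0) \<or> (c = c1 \<and> d = d1)"
    unfolding rel_m_def members using q pair_inject by blast
qed

lemma finite_m_upair:
  assumes "upair_m e a b t"
  shows "finite_m e t"
proof -
  obtain w z0 z1 z2 where w: "omega_m e w" "e z0 w" "e z1 w" "e z2 w"
    and z: "elts z0 = {}" "elts z1 = {z0}" "elts z2 = {z0, z1}"
    using numerals_in_omega by blast
  have "z0 \<noteq> z1" using z by auto
  obtain q0 q1 where q: "pair_m e z0 a q0" "pair_m e z1 b q1" using pair_exists by metis
  have mem: "\<And>c. e c z1 \<longleftrightarrow> c = z0" "\<And>c. e c z2 \<longleftrightarrow> c = z0 \<or> c = z1"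
    "\<And>d. e d t \<longleftrightarrow> d = a \<or> d = b"
    using z assms unfolding upair_m_iff_elts elts_def by auto
  show ?thesis
  proof (cases "a = b")
    case True
    obtain f where "elts f = {q0, q0}" using upair_exists upair_m_iff_elts by blast
    note graph = rel_m_of_two_pairs[OF this q(1) q(1)]
    have "bij_m e f z1 t"
      by (rule bij_mI) (auto simp: graph mem True)
    then show ?thesis unfolding finite_m_def in_omega_m_def using w by blast
  next
    case False
    obtain f where "elts f = {q0, q1}" using upair_exists upair_m_iff_elts by blast
    note graph = rel_m_of_two_pairs[OF this q]
    have "bij_m e f z2 t"
      by (rule bij_mI) (use \<open>z0 \<noteq> z1\<close> \<open>a \<noteq> b\<close> in \<open>auto simp: graph mem\<close>)
    then show ?thesis unfolding finite_m_def in_omega_m_def using w by blast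
  qed
qed

definition finite_subset_closed :: "'a \<Rightarrow> bool" where
  "finite_subset_closed Y \<longleftrightarrow> (\<forall>x. finite_m e x \<and> subset_m e x Y \<longrightarrow> e x Y)"

lemma finite_subset_closed_superset: "\<exists>Y. subset_m e X Y \<and> finite_subset_closed Y"
  using model unfolding Z_FTM_omega_def ax_FC_def finite_subset_closed_def by blast

lemma finite_subset_closed_upair:
  "finite_subset_closed Y \<Longrightarrow> e a Y \<Longrightarrow> e b Y \<Longrightarrow> upair_m e a b t \<Longrightarrow> e t Y"
  unfolding finite_subset_closed_def subset_m_def by (metis finite_m_upair upair_m_def)

lemma finite_subset_closed_pair:
  "finite_subset_closed Y \<Longrightarrow> e a Y \<Longrightarrow> e b Y \<Longrightarrow> pair_m e a b p \<Longrightarrow> e p Y"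
  unfolding pair_m_def by (meson finite_subset_closed_upair)

lemma product_exists: "\<exists>z. \<forall>p. e p z \<longleftrightarrow> (\<exists>u v. e u U \<and> e v V \<and> pair_m e u v p)"
proof -
  obtain A where "elts A = elts U \<union> elts V" using binary_union_exists by blast
  then obtain Y where Y: "elts U \<subseteq> elts Y" "elts V \<subseteq> elts Y" "finite_subset_closed Y"
    using finite_subset_closed_superset subset_m_iff_elts by (metis le_sup_iff)
  show ?thesis
  proof (rule definable_subset_exists[where Y = Y and env = "(\<lambda>_. U)(2 := V)" and i = 0
        and phi = "FEx 3 (FEx 4 (FAnd (FMem 3 1) (FAnd (FMem 4 2) (Fpair 3 4 0 5))))"])
    show "{p. \<exists>u v. e u U \<and> e v V \<and> pair_m e u v p} \<subseteq> elts Y"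
      using Y finite_subset_closed_pair unfolding elts_def by blast
  qed simp
qed

lemma finite_subsets_exist: "\<exists>z. \<forall>x. e x z \<longleftrightarrow> subset_m e x U \<and> finite_m e x"
proof -
  obtain Y where Y: "subset_m e U Y" "finite_subset_closed Y"
    using finite_subset_closed_superset by blast
  show ?thesis
  proof (rule definable_subset_exists[where Y = Y and env = "\<lambda>_. U" and i = 0
        and phi = "FAnd (Fsubset 0 1 2) (Ffinite 0 2)"])
    show "{x. subset_m e x U \<and> finite_m e x} \<subseteq> elts Y"
      using Y unfolding finite_subset_closed_def subset_m_def elts_def by blast
  qed simp
qed

lemma finseq_m_finite:
  assumes "finseq_m e U s"
  shows "finite_m e s"
proof -
  obtain n where n: "in_omega_m e n" "function_m e s" "dom_is_m e s n"
    using assms unfolding finseq_m_def by blast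
  obtain P where P: "\<forall>q. e q P \<longleftrightarrow> (\<exists>u v. e u n \<and> e v s \<and> pair_m e u v q)"
    using product_exists by blast
  define G where "G q \<longleftrightarrow> (\<exists>a p b. e p s \<and> pair_m e a b p \<and> pair_m e a p q)" for q
  have "\<exists>g. \<forall>q. e q g \<longleftrightarrow> G q"
  proof (rule definable_subset_exists[where Y = P and env = "\<lambda>_. s" and i = 0
        and phi = "FEx 2 (FEx 3 (FEx 4 (FAnd (FMem 3 1) (FAnd (Fpair 2 4 3 5) (Fpair 2 3 0 5)))))"])
    show "{q. G q} \<subseteq> elts P"
    proof
      fix q assume "q \<in> {q. G q}"
      then obtain a p b where "e p s" "pair_m e a b p" "pair_m e a p q" unfolding G_def by blast
      moreover from this have "e a n" using n(3) unfolding dom_is_m_def rel_m_def by blast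
      ultimately show "q \<in> elts P" using P unfolding elts_def by blast
    qed
    show "G q \<longleftrightarrow> sat e ((\<lambda>_. s)(0 := q)) (FEx 2 (FEx 3 (FEx 4 (FAnd (FMem 3 1) (FAnd (Fpair 2 4 3 5) (Fpair 2 3 0 5))))))" for q
      unfolding G_def by simp
  qed
  then obtain g where g: "\<And>q. e q g \<longleftrightarrow> G q" by blast
  have rel_g: "rel_m e g a p \<longleftrightarrow> e p s \<and> (\<exists>b. pair_m e a b p)" for a p
    unfolding rel_m_def g G_def by (metis pair_exists pair_inject)
  have s_fun: "\<And>a b b'. rel_m e s a b \<Longrightarrow> rel_m e s a b' \<Longrightarrow> b = b'"
    and s_pairs: "\<And>p. e p s \<Longrightarrow> \<exists>a b. pair_m e a b p"
    using n(2) unfolding function_m_def relation_m_def by blast+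
  have s_dom: "e a n \<longleftrightarrow> (\<exists>b. rel_m e s a b)" for a
    using n(3) unfolding dom_is_m_def by blast
  have "bij_m e g n s"
  proof (rule bij_mI)
    show "relation_m e g" unfolding relation_m_def g G_def by blast
    show "e a n \<and> e p s" if g_ap: "rel_m e g a p" for a p
    proof -
      obtain b where "e p s" "pair_m e a b p" using g_ap unfolding rel_g by blast
      then have "rel_m e s a b" unfolding rel_m_def by blast
      with \<open>e p s\<close> show ?thesis using s_dom by blast
    qed
    show "\<exists>!p. rel_m e g a p" if "e a n" for a
    proof -
      obtain b p where "e p s" "pair_m e a b p" using \<open>e a n\<close> s_dom unfolding rel_m_def by blast
      moreover have "p' = p" if p': "e p' s" "pair_m e a b' p'" for b' p'
      proof -
        have "b' = b" using s_fun \<open>e p s\<close> \<open>pair_m e a b p\<close> p' unfolding rel_m_def by blast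
        then show ?thesis using pair_unique \<open>pair_m e a b p\<close> p'(2) by blast
      qed
      ultimately show ?thesis unfolding rel_g by (intro ex1I) blast+
    qed
    show "\<exists>!a. rel_m e g a p" if p: "e p s" for p
    proof -
      obtain a b where "pair_m e a b p" using s_pairs[OF p] by blast
      with p show ?thesis unfolding rel_g by (intro ex1I) (blast dest: pair_inject)+
    qed
  qed
  then show ?thesis unfolding finite_m_def using n(1) by blast
qed
lemma finseqs_exist: "\<exists>z. \<forall>s. e s z \<longleftrightarrow> finseq_m e U s"
proof -
  obtain w where w: "omega_m e w" using omega_exists by blast
  obtain W where W: "elts W = \<Union> (elts ` elts w)" using union_exists by blast
  obtain A where "elts A = elts W \<union> elts U" using binary_union_exists by blast
  then obtain Y where Y: "elts W \<subseteq> elts Y" "elts U \<subseteq> elts Y" "finite_subset_closed Y"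
    using finite_subset_closed_superset subset_m_iff_elts by (metis le_sup_iff)
  have "e s Y" if s: "finseq_m e U s" for s
  proof -
    obtain n where n: "e n w" "function_m e s" "dom_is_m e s n" "\<forall>a b. rel_m e s a b \<longrightarrow> e b U"
      using s omega_unique w unfolding finseq_m_def in_omega_m_def by metis
    have "e p Y" if "e p s" for p
    proof -
      obtain a b where ab: "pair_m e a b p"
        using n(2) \<open>e p s\<close> unfolding function_m_def relation_m_def by blast
      then have "rel_m e s a b" using \<open>e p s\<close> unfolding rel_m_def by blast
      then have "e a W" "e b U" using n W unfolding dom_is_m_def elts_def by blast+
      then show ?thesis using Y ab finite_subset_closed_pair unfolding elts_def by blast
    qed
    then show ?thesis
      using Y(3) finseq_m_finite[OF s] unfolding finite_subset_closed_def subset_m_def by blast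
  qed
  then show ?thesis
    by (intro definable_subset_exists[where Y = Y and env = "\<lambda>_. U" and i = 0
          and phi = "Ffinseq 1 0 2"]) (auto simp: elts_def)
qed

end

theorem lemma9p2:
  fixes e :: "'a \<Rightarrow> 'a \<Rightarrow> bool"
  assumes "Z_FTM_omega e"
  shows "(\<forall>U V. \<exists>z. \<forall>p. e p z \<longleftrightarrow> (\<exists>u v. e u U \<and> e v V \<and> pair_m e u v p))
       \<and> (\<forall>U. \<exists>z. \<forall>x. e x z \<longleftrightarrow> (subset_m e x U \<and> finite_m e x))
       \<and> (\<forall>U. \<exists>z. \<forall>s. e s z \<longleftrightarrow> finseq_m e U s)"
proof -
  interpret Z_FTM_omega_model e using assms by (rule Z_FTM_omega_model.intro)
  show ?thesis using product_exists finite_subsets_exist finseqs_exist by blast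
qed

end
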